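(* Let $(X,\mathcal{T})$ be an anti-topological space and let $A,B\subseteq X$ be anti-dense. Then $A\cup B$ is anti-dense.
   Context: Let $X$ be a non-empty set. A family $\mathcal{T}\subseteq P(X)$ is an anti-topology on $X$ (and $(X,\mathcal{T})$ is an anti-topological space) if: (i) $\emptyset\notin\mathcal{T}$ and $X\notin\mathcal{T}$; (ii) for every $n\in\mathbb{N}$ and all $A_1,\dots,A_n\in\mathcal{T}$ that are not all equal, $\bigcap_{i=1}^n A_i\notin\mathcal{T}$; (iii) for every non-empty index set $J$ and all sets $A_i\in\mathcal{T}$ ($i\in J$) that are not all equal, $\bigcup_{i\in J}A_i\notin\mathcal{T}$. Elements of $\mathcal{T}$ are called anti-open; a set is anti-closed if its complement is anti-open, and $\mathcal{T}_{Cl}$ denotes the family of all anti-closed sets. The anti-closure of $A\subseteq X$ is $aCl(A)=\bigcap\{F: A\subseteq F,\ F\in\mathcal{T}_{Cl}\}$ (the intersection of the empty family being $X$). $A$ is anti-dense if $aCl(A)=X$. *)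

theory Defs
  imports Main
begin

definition anti_topology :: "'a set \<Rightarrow> 'a set set \<Rightarrow> bool" where
  "anti_topology X T \<longleftrightarrow>
     X \<noteq> {} \<and> T \<subseteq> Pow X \<and>
     {} \<notin> T \<and> X \<notin> T \<and>
     (\<forall>n::nat. \<forall>A::nat \<Rightarrow> 'a set. n \<ge> 1 \<longrightarrow> (\<forall>i\<in>{1..n}. A i \<in> T) \<longrightarrow>
        (\<exists>i\<in>{1..n}. \<exists>j\<in>{1..n}. A i \<noteq> A j) \<longrightarrow> (\<Inter>i\<in>{1..n}. A i) \<notin> T) \<and>
     (\<forall>S. S \<subseteq> T \<longrightarrow> S \<noteq> {} \<longrightarrow> (\<exists>A\<in>S. \<exists>B\<in>S. A \<noteq> B) \<longrightarrow> \<Union>S \<notin> T)"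

definition anti_closed_sets :: "'a set \<Rightarrow> 'a set set \<Rightarrow> 'a set set" where
  "anti_closed_sets X T = {F. F \<subseteq> X \<and> X - F \<in> T}"

definition anti_closure :: "'a set \<Rightarrow> 'a set set \<Rightarrow> 'a set \<Rightarrow> 'a set" where
  "anti_closure X T A = X \<inter> \<Inter>{F. A \<subseteq> F \<and> F \<in> anti_closed_sets X T}"

definition anti_dense :: "'a set \<Rightarrow> 'a set set \<Rightarrow> 'a set \<Rightarrow> bool" where
  "anti_dense X T A \<longleftrightarrow> anti_closure X T A = X"

end

theory Submission
  imports Defs
begin

lemma anti_closure_subset: "anti_closure X T A \<subseteq> X"
  unfolding anti_closure_def by blast

lemma anti_closure_mono: "A \<subseteq> B \<Longrightarrow> anti_closure X T A \<subseteq> anti_closure X T B"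
  unfolding anti_closure_def by blast

lemma anti_dense_mono:
  assumes "anti_dense X T A" and "A \<subseteq> B"
  shows "anti_dense X T B"
  using assms anti_closure_mono[of A B X T] anti_closure_subset[of X T B]
  unfolding anti_dense_def by blast

theorem mainTheorem20:
  assumes "anti_topology X T"
    and "A \<subseteq> X" and "B \<subseteq> X"
    and "anti_dense X T A" and "anti_dense X T B"
  shows "anti_dense X T (A \<union> B)"
  using anti_dense_mono[OF \<open>anti_dense X T A\<close>] by blast

end
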